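(* Let $i=\sqrt{-1}$ and let $\zeta_8$ be a primitive $8$-th root of unity. (1) $\{\operatorname{Tr}(M) : M\in G_q(i)\}=\{0,\pm1,\pm2,\pm i,\pm 2i,\pm1\pm i\ (\text{arbitrary signs})\}=\{0,\ c,\ \sqrt{2}\,\zeta_8\,c,\ 2c : c=i^j,\ j=0,1,2,3\}$. (2) For $M_q\in G_q$, let $f(q)=\operatorname{Tr} M_q$. If $f(1)$ is a multiple of $4$, then $f(i)=0$.
   Context: Let $q$ be a formal parameter and let $R_q=\begin{pmatrix} q & 1\\ 0 & 1\end{pmatrix}$, $S_q=\begin{pmatrix} 0 & -q^{-1}\\ 1 & 0\end{pmatrix}\in \mathrm{GL}(2,\mathbb{Z}[q,q^{-1}])$. Let $G_q=\langle R_q,S_q\rangle$ be the group they generate. For $\zeta\in\mathbb{C}^*$, set $G_q(\zeta)=\{M_q|_{q=\zeta} : M_q\in G_q\}\subset \mathrm{GL}(2,\mathbb{C})$. *)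

theory Defs
  imports "HOL-Analysis.Analysis"
begin

definition mat2 :: "complex \<Rightarrow> complex \<Rightarrow> complex \<Rightarrow> complex \<Rightarrow> complex^2^2" where
  "mat2 a b c d = vector [vector [a, b], vector [c, d]]"

text \<open>The generators R_q, S_q and their inverses, viewed as functions of the
  parameter q (meaningful for q nonzero; entries are Laurent polynomials in q).\<close>
definition Rq :: "complex \<Rightarrow> complex^2^2" where
  "Rq q = mat2 q 1 0 1"
definition Sq :: "complex \<Rightarrow> complex^2^2" where
  "Sq q = mat2 0 (- inverse q) 1 0"
definition Rq_inv :: "complex \<Rightarrow> complex^2^2" where
  "Rq_inv q = mat2 (inverse q) (- inverse q) 0 1"
definition Sq_inv :: "complex \<Rightarrow> complex^2^2" where
  "Sq_inv q = mat2 0 1 (- q) 0"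

text \<open>G_q = the group generated by R_q and S_q: all finite products of the
  generators and their inverses (each element is a Laurent-polynomial matrix,
  represented by its evaluation function q \<mapsto> M_q).\<close>
inductive_set Gq :: "(complex \<Rightarrow> complex^2^2) set" where
  one: "(\<lambda>q. mat 1) \<in> Gq"
| R: "Rq \<in> Gq"
| S: "Sq \<in> Gq"
| Rinv: "Rq_inv \<in> Gq"
| Sinv: "Sq_inv \<in> Gq"
| mult: "M \<in> Gq \<Longrightarrow> N \<in> Gq \<Longrightarrow> (\<lambda>q. M q ** N q) \<in> Gq"

definition Gq_at :: "complex \<Rightarrow> (complex^2^2) set" where
  "Gq_at z = (\<lambda>M. M z) ` Gq"

end

theory Submission
  imports Defs
begin

text \<open>Specialisation at \<open>q = 1\<close> followed by reduction mod 4, and specialisation at \<open>q = \<i>\<close>,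
  are ring homomorphisms on \<open>\<int>[q, q\<^sup>-\<^sup>1]\<close>, so \<open>M \<mapsto> (M(1) mod 4, M(\<i>))\<close> is multiplicative on
  \<open>G\<^sub>q\<close>. Its image is a group of 192 elements in which \<open>M(\<i>)\<close> is determined, up to a fourth root
  of unity, by \<open>M(1) mod 4 \<in> SL(2, \<int>/4)\<close>. A table of 48 representatives that is stable under
  right multiplication by the generators therefore covers all of \<open>G\<^sub>q\<close>, and both trace
  statements become finite checks on it. The values \<open>\<plusminus>1 \<plusminus> \<i>\<close> are exactly the numbers
  \<open>\<surd>2 \<zeta>\<^sub>8\<close> for primitive eighth roots of unity \<open>\<zeta>\<^sub>8\<close>.\<close>

type_synonym 'a quad = "'a \<times> 'a \<times> 'a \<times> 'a"

fun quad_mult :: "'a::semiring quad \<Rightarrow> 'a quad \<Rightarrow> 'a quad" where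
  "quad_mult (a, b, c, d) (e, f, g, h) = (a * e + b * g, a * f + b * h, c * e + d * g, c * f + d * h)"

fun quad_map :: "('a \<Rightarrow> 'b) \<Rightarrow> 'a quad \<Rightarrow> 'b quad" where
  "quad_map f (a, b, c, d) = (f a, f b, f c, f d)"

fun quad_trace :: "'a::plus quad \<Rightarrow> 'a" where
  "quad_trace (a, b, c, d) = a + d"

definition quad_mod :: "int \<Rightarrow> int quad \<Rightarrow> int quad" where
  "quad_mod n = quad_map (\<lambda>x. x mod n)"

fun quad_mat :: "complex quad \<Rightarrow> complex^2^2" where
  "quad_mat (a, b, c, d) = mat2 a b c d"

lemma quad_map_mult:
  assumes "\<And>x y. f (x + y) = f x + f y" and "\<And>x y. f (x * y) = f x * f y"
  shows "quad_map f (quad_mult A B) = quad_mult (quad_map f A) (quad_map f B)"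
  by (cases A; cases B) (simp add: assms)

lemma quad_trace_map:
  assumes "\<And>x y. f (x + y) = f x + f y"
  shows "quad_trace (quad_map f A) = f (quad_trace A)"
  by (cases A) (simp add: assms)

lemma quad_mult_scale_left:
  fixes c :: "'a::comm_semiring"
  shows "quad_mult (quad_map ((*) c) A) B = quad_map ((*) c) (quad_mult A B)"
  by (cases A; cases B) (simp add: algebra_simps)

lemma mod_linear_combination_left:
  fixes n :: int
  shows "(a mod n * x + b mod n * y) mod n = (a * x + b * y) mod n"
  by (metis mod_add_eq mod_mult_left_eq)

lemma quad_mod_mult_left: "quad_mod n (quad_mult (quad_mod n A) B) = quad_mod n (quad_mult A B)"
  by (cases A; cases B) (simp add: quad_mod_def mod_linear_combination_left)

lemma quad_trace_mod: "quad_trace (quad_mod n A) mod n = quad_trace A mod n"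
  by (cases A) (simp add: quad_mod_def mod_simps)

lemma mat2_mult: "mat2 a b c d ** mat2 e f g h = mat2 (a*e + b*g) (a*f + b*h) (c*e + d*g) (c*f + d*h)"
  unfolding mat2_def matrix_matrix_mult_def by (simp add: vec_eq_iff forall_2 sum_2)

lemma quad_mat_mult: "quad_mat A ** quad_mat B = quad_mat (quad_mult A B)"
  by (cases A; cases B) (simp add: mat2_mult)

lemma trace_mat2: "trace (mat2 a b c d) = a + d"
  by (simp add: mat2_def trace_def sum_2)

lemma trace_quad_mat: "trace (quad_mat A) = quad_trace A"
  by (cases A) (simp add: trace_mat2)

lemma quad_mat_one: "quad_mat (1, 0, 0, 1) = mat 1"
  by (simp add: mat2_def vec_eq_iff forall_2 mat_def)

definition fourth_roots :: "complex list" where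
  "fourth_roots = [1, \<i>, -1, -\<i>]"

lemma fourth_roots_mult: "c \<in> set fourth_roots \<Longrightarrow> d \<in> set fourth_roots \<Longrightarrow> c * d \<in> set fourth_roots"
  by (auto simp: fourth_roots_def)

text \<open>Obtained by enumerating the image of \<open>G\<^sub>q\<close>: for each \<open>A\<close> in \<open>SL(2, \<int>/4)\<close>, with entries in
  \<open>{0..3}\<close>, a matrix \<open>B\<close> such that \<open>M(1) \<equiv> A (mod 4)\<close> forces \<open>M(\<i>) \<in> {B, \<i> B, -B, -\<i> B}\<close>.\<close>

definition value_at_i_table :: "(int quad \<times> complex quad) list" where
  "value_at_i_table =
  [
   ((0, 1, 3, 0), (0, 1, - \<i>, 0)),
   ((0, 1, 3, 1), (0, 1, -1, 1)),
   ((0, 1, 3, 2), (0, 1, \<i>, 1 - \<i>)),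
   ((0, 1, 3, 3), (0, 1, 1, - \<i>)),
   ((0, 3, 1, 0), (0, 1, - \<i>, 0)),
   ((0, 3, 1, 1), (0, 1, 1, - \<i>)),
   ((0, 3, 1, 2), (0, 1, \<i>, 1 - \<i>)),
   ((0, 3, 1, 3), (0, 1, -1, 1)),
   ((1, 0, 0, 1), (1, 0, 0, 1)),
   ((1, 0, 1, 1), (1, 0, 1, - \<i>)),
   ((1, 0, 2, 1), (1, 0, 1 - \<i>, -1)),
   ((1, 0, 3, 1), (1, 0, - \<i>, \<i>)),
   ((1, 1, 0, 1), (1, - \<i>, 0, - \<i>)),
   ((1, 1, 1, 2), (1, - \<i>, 1, -1 - \<i>)),
   ((1, 1, 2, 3), (1, - \<i>, 1 - \<i>, -1)),
   ((1, 1, 3, 0), (1, - \<i>, - \<i>, 0)),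
   ((1, 2, 0, 1), (1, -1 - \<i>, 0, -1)),
   ((1, 2, 1, 3), (1, -1 - \<i>, 1, -1)),
   ((1, 2, 2, 1), (1, -1 - \<i>, 1 - \<i>, -1)),
   ((1, 2, 3, 3), (1, -1 - \<i>, - \<i>, -1)),
   ((1, 3, 0, 1), (1, -1, 0, \<i>)),
   ((1, 3, 1, 0), (1, -1, 1, 0)),
   ((1, 3, 2, 3), (1, -1, 1 - \<i>, -1)),
   ((1, 3, 3, 2), (1, -1, - \<i>, -1 + \<i>)),
   ((2, 1, 1, 1), (1 + \<i>, - \<i>, 1, - \<i>)),
   ((2, 1, 1, 3), (1 + \<i>, - \<i>, 1, -1)),
   ((2, 1, 3, 0), (1 + \<i>, - \<i>, 1, 0)),
   ((2, 1, 3, 2), (1 + \<i>, - \<i>, 1, -1 - \<i>)),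
   ((2, 3, 1, 0), (1 + \<i>, - \<i>, 1, 0)),
   ((2, 3, 1, 2), (1 + \<i>, - \<i>, 1, -1 - \<i>)),
   ((2, 3, 3, 1), (1 + \<i>, - \<i>, 1, -1)),
   ((2, 3, 3, 3), (1 + \<i>, - \<i>, 1, - \<i>)),
   ((3, 0, 0, 3), (1, 0, 0, 1)),
   ((3, 0, 1, 3), (1, 0, - \<i>, \<i>)),
   ((3, 0, 2, 3), (1, 0, 1 - \<i>, -1)),
   ((3, 0, 3, 3), (1, 0, 1, - \<i>)),
   ((3, 1, 0, 3), (1, -1, 0, \<i>)),
   ((3, 1, 1, 2), (1, -1, - \<i>, -1 + \<i>)),
   ((3, 1, 2, 1), (1, -1, 1 - \<i>, -1)),
   ((3, 1, 3, 0), (1, -1, 1, 0)),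
   ((3, 2, 0, 3), (1, -1 - \<i>, 0, -1)),
   ((3, 2, 1, 1), (1, -1 - \<i>, - \<i>, -1)),
   ((3, 2, 2, 3), (1, -1 - \<i>, 1 - \<i>, -1)),
   ((3, 2, 3, 1), (1, -1 - \<i>, 1, -1)),
   ((3, 3, 0, 3), (1, - \<i>, 0, - \<i>)),
   ((3, 3, 1, 0), (1, - \<i>, - \<i>, 0)),
   ((3, 3, 2, 1), (1, - \<i>, 1 - \<i>, -1)),
   ((3, 3, 3, 2), (1, - \<i>, 1, -1 - \<i>))
  ]"

definition admissible :: "int quad \<Rightarrow> complex quad \<Rightarrow> bool" where
  "admissible A B \<longleftrightarrow> (case map_of value_at_i_table A of
      None \<Rightarrow> False
    | Some B\<^sub>0 \<Rightarrow> (\<exists>c\<in>set fourth_roots. B = quad_map ((*) c) B\<^sub>0))"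

definition generators :: "(int quad \<times> complex quad) list" where
  "generators =
    [((1, 1, 0, 1), (\<i>, 1, 0, 1)), ((0, -1, 1, 0), (0, \<i>, 1, 0)),
     ((1, -1, 0, 1), (-\<i>, \<i>, 0, 1)), ((0, 1, -1, 0), (0, 1, -\<i>, 0))]"

lemma value_at_i_table_stable:
  "list_all (\<lambda>(A, B). list_all (\<lambda>(N, G). admissible (quad_mod 4 (quad_mult A N)) (quad_mult B G))
     generators) value_at_i_table"
  by code_simp

lemma admissible_mult_generator:
  assumes "admissible A B" and "(N, G) \<in> set generators"
  shows "admissible (quad_mod 4 (quad_mult A N)) (quad_mult B G)"
proof -
  obtain B\<^sub>0 c where entry: "map_of value_at_i_table A = Some B\<^sub>0"
    and c: "c \<in> set fourth_roots" and B: "B = quad_map ((*) c) B\<^sub>0"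
    using assms(1) by (auto simp: admissible_def split: option.splits)
  have "admissible (quad_mod 4 (quad_mult A N)) (quad_mult B\<^sub>0 G)"
    using value_at_i_table_stable map_of_SomeD[OF entry] assms(2) by (auto simp: list_all_iff)
  then obtain B\<^sub>1 d where "map_of value_at_i_table (quad_mod 4 (quad_mult A N)) = Some B\<^sub>1"
    and "d \<in> set fourth_roots" and "quad_mult B\<^sub>0 G = quad_map ((*) d) B\<^sub>1"
    by (auto simp: admissible_def split: option.splits)
  moreover have "quad_map ((*) c) (quad_map ((*) d) B\<^sub>1) = quad_map ((*) (c * d)) B\<^sub>1"
    by (cases B\<^sub>1) (simp add: mult.assoc)
  ultimately show ?thesis
    using c fourth_roots_mult by (auto simp: admissible_def B quad_mult_scale_left)
qed

definition admissible_pair :: "complex^2^2 \<Rightarrow> complex^2^2 \<Rightarrow> bool" where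
  "admissible_pair X Y \<longleftrightarrow>
     (\<exists>N B. X = quad_mat (quad_map of_int N) \<and> Y = quad_mat B \<and> admissible (quad_mod 4 N) B)"

lemma generator_values:
  assumes "G \<in> {Rq, Sq, Rq_inv, Sq_inv}"
  shows "\<exists>(N, B)\<in>set generators. G 1 = quad_mat (quad_map of_int N) \<and> G \<i> = quad_mat B"
  using assms
  by (auto simp: generators_def Rq_def Sq_def Rq_inv_def Sq_inv_def)

lemma admissible_pair_mult_generator:
  assumes "admissible_pair X Y" and "G \<in> {Rq, Sq, Rq_inv, Sq_inv}"
  shows "admissible_pair (X ** G 1) (Y ** G \<i>)"
proof -
  obtain N B where X: "X = quad_mat (quad_map of_int N)" and Y: "Y = quad_mat B"
    and adm: "admissible (quad_mod 4 N) B"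
    using assms(1) by (auto simp: admissible_pair_def)
  obtain N' B' where gen: "(N', B') \<in> set generators"
    and G: "G 1 = quad_mat (quad_map of_int N')" "G \<i> = quad_mat B'"
    using generator_values[OF assms(2)] by auto
  have "admissible (quad_mod 4 (quad_mult N N')) (quad_mult B B')"
    using admissible_mult_generator[OF adm gen] by (simp add: quad_mod_mult_left)
  moreover have "X ** G 1 = quad_mat (quad_map of_int (quad_mult N N'))"
    by (simp add: X G quad_mat_mult quad_map_mult)
  moreover have "Y ** G \<i> = quad_mat (quad_mult B B')"
    by (simp add: Y G quad_mat_mult)
  ultimately show ?thesis
    unfolding admissible_pair_def by blast
qed

lemma admissible_pair_mult_Gq:
  assumes "M \<in> Gq" and "admissible_pair X Y"
  shows "admissible_pair (X ** M 1) (Y ** M \<i>)"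
  using assms
proof (induction arbitrary: X Y)
  case (mult M N)
  then show ?case by (metis matrix_mul_assoc)
qed (simp_all add: admissible_pair_mult_generator)

lemma admissible_pair_Gq:
  assumes "M \<in> Gq"
  shows "admissible_pair (M 1) (M \<i>)"
proof -
  have "admissible (quad_mod 4 (1, 0, 0, 1)) (1, 0, 0, 1)"
    by code_simp
  then have "admissible_pair (mat 1) (mat 1)"
    unfolding admissible_pair_def by (metis quad_mat_one quad_map.simps of_int_0 of_int_1)
  from admissible_pair_mult_Gq[OF assms this] show ?thesis
    by simp
qed

definition trace_values :: "complex set" where
  "trace_values = {0, 1, -1, 2, -2, \<i>, -\<i>, 2*\<i>, -2*\<i>, 1+\<i>, 1-\<i>, -1+\<i>, -1-\<i>}"

lemma value_at_i_table_traces: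
  "list_all (\<lambda>(A, B). (\<forall>c\<in>set fourth_roots. c * quad_trace B \<in> trace_values)
     \<and> (quad_trace A mod 4 = 0 \<longrightarrow> quad_trace B = 0)) value_at_i_table"
  by code_simp

lemma admissible_trace:
  assumes "admissible A B"
  shows "quad_trace B \<in> trace_values" and "quad_trace A mod 4 = 0 \<Longrightarrow> quad_trace B = 0"
proof -
  obtain B\<^sub>0 c where entry: "(A, B\<^sub>0) \<in> set value_at_i_table"
    and c: "c \<in> set fourth_roots" and B: "B = quad_map ((*) c) B\<^sub>0"
    using assms by (auto simp: admissible_def dest: map_of_SomeD split: option.splits)
  have trace_B: "quad_trace B = c * quad_trace B\<^sub>0"
    unfolding B by (rule quad_trace_map) (simp add: distrib_left)
  show "quad_trace B \<in> trace_values"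
    using value_at_i_table_traces entry c by (auto simp: list_all_iff trace_B)
  show "quad_trace B = 0" if "quad_trace A mod 4 = 0"
    using value_at_i_table_traces entry that by (auto simp: list_all_iff trace_B)
qed

lemma trace_at_i_Gq:
  assumes "M \<in> Gq"
  shows "trace (M \<i>) \<in> trace_values"
proof -
  obtain N B where "M \<i> = quad_mat B" and "admissible (quad_mod 4 N) B"
    using admissible_pair_Gq[OF assms] by (auto simp: admissible_pair_def)
  then show ?thesis
    using admissible_trace(1) by (simp add: trace_quad_mat)
qed

lemma trace_at_i_eq_0:
  assumes "M \<in> Gq" and "trace (M 1) = 4 * of_int k"
  shows "trace (M \<i>) = 0"
proof -
  obtain N B where M1: "M 1 = quad_mat (quad_map of_int N)" and Mi: "M \<i> = quad_mat B"
    and adm: "admissible (quad_mod 4 N) B"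
    using admissible_pair_Gq[OF assms(1)] by (auto simp: admissible_pair_def)
  have "of_int (quad_trace N) = (of_int (4 * k) :: complex)"
    using assms(2) by (simp add: M1 trace_quad_mat quad_trace_map)
  then have "quad_trace (quad_mod 4 N) mod 4 = 0"
    by (simp only: of_int_eq_iff quad_trace_mod) simp
  then show ?thesis
    using admissible_trace(2)[OF adm] by (simp add: Mi trace_quad_mat)
qed

lemma trace_values_attained: "trace_values \<subseteq> trace ` Gq_at \<i>"
proof -
  have attained: "trace (M \<i>) \<in> trace ` Gq_at \<i>" if "M \<in> Gq" for M
    using that by (auto simp: Gq_at_def)
  have RS: "(\<lambda>q. Rq q ** Sq q) \<in> Gq" by (rule Gq.mult[OF Gq.R Gq.S])
  have SS: "(\<lambda>q. Sq q ** Sq q) \<in> Gq" by (rule Gq.mult[OF Gq.S Gq.S])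
  have SiSi: "(\<lambda>q. Sq_inv q ** Sq_inv q) \<in> Gq" by (rule Gq.mult[OF Gq.Sinv Gq.Sinv])
  show ?thesis
    unfolding trace_values_def
    using attained[OF Gq.S] attained[OF RS] attained[OF Gq.mult[OF RS RS]] attained[OF Gq.one]
      attained[OF Gq.mult[OF SS SS]] attained[OF Gq.mult[OF Gq.S Gq.Rinv]]
      attained[OF Gq.mult[OF Gq.R Gq.Sinv]] attained[OF SS] attained[OF SiSi] attained[OF Gq.R]
      attained[OF Gq.Rinv] attained[OF Gq.mult[OF RS Gq.S]] attained[OF Gq.mult[OF Gq.Rinv SiSi]]
    by (simp add: Rq_def Sq_def Rq_inv_def Sq_inv_def mat2_mult trace_mat2 quad_mat_one[symmetric])
      (metis add.commute diff_conv_add_uminus)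
qed

lemma sqrt2_times_primitive_eighth_root:
  fixes z :: complex
  assumes "z ^ 8 = 1" and "z ^ 4 \<noteq> 1"
  shows "complex_of_real (sqrt 2) * z \<in> {1+\<i>, 1-\<i>, -1+\<i>, -1-\<i>}"
proof -
  have "(z ^ 4 - 1) * (z ^ 4 + 1) = 0"
    using assms(1) by (simp add: algebra_simps flip: power_add)
  with assms(2) have z4: "z ^ 4 = -1"
    by (simp add: eq_neg_iff_add_eq_0)
  have "(sqrt 2 :: real) ^ 4 = 4"
    using power_mult[of "sqrt 2" 2 2] by simp
  then have "complex_of_real (sqrt 2) ^ 4 = 4"
    by (metis of_real_numeral of_real_power)
  then have "(complex_of_real (sqrt 2) * z) ^ 4 + 4 = 0"
    by (simp add: power_mult_distrib z4)
  moreover have "w ^ 4 + 4 = (w - (1+\<i>)) * (w - (1-\<i>)) * (w - (-1+\<i>)) * (w - (-1-\<i>))" for w :: complex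
    by (simp add: algebra_simps power2_eq_square power4_eq_xxxx)
  ultimately show ?thesis
    by auto
qed

lemma trace_values_rotations:
  assumes "w \<in> {1+\<i>, 1-\<i>, -1+\<i>, -1-\<i>}"
  shows "trace_values = {0} \<union> (\<Union>j\<in>{0..3::nat}. let c = \<i> ^ j in {c, w * c, 2 * c})"
proof -
  have "{0..3::nat} = {0, 1, 2, 3}"
    by auto
  moreover have "\<i> ^ 3 = - \<i>"
    by (simp add: power3_eq_cube)
  ultimately have "{0} \<union> (\<Union>j\<in>{0..3::nat}. let c = \<i> ^ j in {c, w * c, 2 * c})
      = {0, 1, w, 2, \<i>, w * \<i>, 2 * \<i>, -1, -w, -2, -\<i>, -(w * \<i>), -2 * \<i>}"
    by (auto simp: Let_def)
  also have "\<dots> = trace_values"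
    using assms by (auto simp: trace_values_def complex_eq_iff)
  finally show ?thesis
    by simp
qed

theorem corollary3p5:
  shows "trace ` Gq_at \<i> =
           {0, 1, -1, 2, -2, \<i>, -\<i>, 2*\<i>, -2*\<i>, 1+\<i>, 1-\<i>, -1+\<i>, -1-\<i>}
       \<and> (\<forall>z8::complex. z8 ^ 8 = 1 \<and> (\<forall>k\<in>{1..7::nat}. z8 ^ k \<noteq> 1) \<longrightarrow>
            {0, 1, -1, 2, -2, \<i>, -\<i>, 2*\<i>, -2*\<i>, 1+\<i>, 1-\<i>, -1+\<i>, -1-\<i>} =
            {0} \<union> (\<Union>j\<in>{0..3::nat}. let c = \<i> ^ j in
                       {c, complex_of_real (sqrt 2) * z8 * c, 2 * c}))
       \<and> (\<forall>M\<in>Gq. (\<exists>k::int. trace (M 1) = 4 * of_int k) \<longrightarrow> trace (M \<i>) = 0)"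
  unfolding trace_values_def[symmetric]
proof (intro conjI allI ballI impI)
  have "trace ` Gq_at \<i> \<subseteq> trace_values"
    using trace_at_i_Gq by (auto simp: Gq_at_def)
  with trace_values_attained show "trace ` Gq_at \<i> = trace_values"
    by blast
next
  fix z8 :: complex
  assume "z8 ^ 8 = 1 \<and> (\<forall>k\<in>{1..7::nat}. z8 ^ k \<noteq> 1)"
  then have "complex_of_real (sqrt 2) * z8 \<in> {1+\<i>, 1-\<i>, -1+\<i>, -1-\<i>}"
    by (intro sqrt2_times_primitive_eighth_root) auto
  then show "trace_values = {0} \<union> (\<Union>j\<in>{0..3::nat}. let c = \<i> ^ j in
      {c, complex_of_real (sqrt 2) * z8 * c, 2 * c})"
    by (rule trace_values_rotations)
next
  fix M
  assume "M \<in> Gq" and "\<exists>k::int. trace (M 1) = 4 * of_int k"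
  then show "trace (M \<i>) = 0"
    using trace_at_i_eq_0 by blast
qed

end
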